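(* Let $M>0$, $\beta^*>0$, and let $g$ be the log-normal density $g(t)=\frac{1}{t\sigma\sqrt{2\pi}}\exp\!\big(-\frac{(\ln t-\mu)^2}{2\sigma^2}\big)$ for $t>0$, $g(t)=0$ for $t\le0$ ($\mu\in\mathbb{R}$, $\sigma>0$). Let $I$ be the unique $C^1$ solution on $[0,\infty)$ of \[ I'(t)=\beta^*(M-I(t))\Big(I(t)-\int_0^t g(t-s)I(s)\,ds\Big),\qquad I(0)=I_0\in[0,M]. \] Then: (1) if $I_0>0$ then $I(t)>0$ for all $t$, and if $I_0=0$ then $I\equiv0$; (2) if $I_0<M$ then $I(t)<M$ for all $t$, and if $I_0=M$ then $I\equiv M$. *)

theory Defs
  imports "HOL-Analysis.Analysis"
begin

definition lognormal_density :: "real \<Rightarrow> real \<Rightarrow> real \<Rightarrow> real" where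
  "lognormal_density \<mu> \<sigma> t =
     (if t > 0 then exp (- ((ln t - \<mu>)^2) / (2 * \<sigma>^2)) / (t * \<sigma> * sqrt (2 * pi))
      else 0)"

end

theory Submission
  imports Defs "HOL-Probability.Distributions" "HOL-Real_Asymp.Real_Asymp"
begin

(* The memory term (g * I)(t) is bounded by the supremum of |I| on [0,t], because the kernel has
   mass less than 1 on every interval [0,t].  Consequently M - I and I satisfy Gronwall-type
   differential inequalities, |(M - I)'| <= C |M - I| and |I'| <= C sup |I|, which keep M - I
   positive and make the constants M and 0 the only solutions starting there.  For 0 < I0 < M,
   positivity comes from a first-exit argument: while I' > 0 on [0,x), I is increasing, so
   (g * I)(x) <= I(x) * mass < I(x), hence I'(x) > 0 as well. *)

lemma integral_pos_of_continuous_pos: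
  fixes f :: "real \<Rightarrow> real"
  assumes "a < b" "continuous_on {a..b} f" "\<And>x. x \<in> {a..b} \<Longrightarrow> 0 < f x"
  shows "0 < integral {a..b} f"
proof -
  obtain x where x: "x \<in> {a..b}" "\<And>y. y \<in> {a..b} \<Longrightarrow> f x \<le> f y"
    using continuous_attains_inf[of "{a..b}" f] assms by auto
  have "0 < integral {a..b} (\<lambda>_. f x)"
    using assms x by simp
  also have "\<dots> \<le> integral {a..b} f"
    using assms x by (intro integral_le) (auto intro: integrable_continuous_interval)
  finally show ?thesis .
qed

lemma continuous_pos_induct:
  fixes f :: "real \<Rightarrow> real"
  assumes "0 \<le> t" "continuous_on {0..t} f" "0 < f 0"
    and step: "\<And>x. 0 < x \<Longrightarrow> x \<le> t \<Longrightarrow>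
      (\<And>s. 0 \<le> s \<Longrightarrow> s < x \<Longrightarrow> 0 < f s) \<Longrightarrow> 0 < f x"
  shows "0 < f t"
proof (rule ccontr)
  assume "\<not> 0 < f t"
  define S where "S = {0..t} \<inter> f -` {..0}"
  have "S \<noteq> {}" "bdd_below S" "closed S"
    using \<open>\<not> 0 < f t\<close> assms(1,2) unfolding S_def
    by (auto intro: continuous_closed_preimage)
  then have "Inf S \<in> S"
    by (rule closed_contains_Inf)
  have below: "0 < f s" if "0 \<le> s" "s < Inf S" for s
    using cInf_lower[OF _ \<open>bdd_below S\<close>, of s] that \<open>Inf S \<in> S\<close> unfolding S_def by force
  have "0 \<le> Inf S" "f (Inf S) \<le> 0"
    using \<open>Inf S \<in> S\<close> unfolding S_def by auto
  with assms(3) have "0 < Inf S"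
    by (cases "Inf S = 0") auto
  have "0 < f (Inf S)"
  proof (rule step)
    show "Inf S \<le> t"
      using \<open>Inf S \<in> S\<close> unfolding S_def by simp
  qed (use \<open>0 < Inf S\<close> below in auto)
  with \<open>Inf S \<in> S\<close> show False
    unfolding S_def by simp
qed

lemma pos_of_deriv_ge_linear:
  fixes f f' :: "real \<Rightarrow> real"
  assumes "0 \<le> t" "continuous_on {0..t} f" "0 < f 0"
    and deriv: "\<And>x. 0 < x \<Longrightarrow> x < t \<Longrightarrow> (f has_real_derivative f' x) (at x)"
    and lower: "\<And>x. 0 < x \<Longrightarrow> x < t \<Longrightarrow> 0 < f x \<Longrightarrow> - A * f x \<le> f' x"
  shows "0 < f t"
proof (rule continuous_pos_induct[OF assms(1-3)])
  fix x assume x: "0 < x" "x \<le> t" and pos: "\<And>s. 0 \<le> s \<Longrightarrow> s < x \<Longrightarrow> 0 < f s"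
  have "exp (A * 0) * f 0 \<le> exp (A * x) * f x"
  proof (rule DERIV_nonneg_imp_increasing_open[of 0 x "\<lambda>s. exp (A * s) * f s"])
    fix s assume s: "0 < s" "s < x"
    have "((\<lambda>s. exp (A * s) * f s) has_real_derivative exp (A * s) * (A * f s + f' s)) (at s)"
      using s x by (auto intro!: derivative_eq_intros deriv simp: algebra_simps)
    moreover have "0 \<le> A * f s + f' s"
      using lower[of s] pos[of s] s x by simp
    ultimately show "\<exists>y. ((\<lambda>s. exp (A * s) * f s) has_real_derivative y) (at s) \<and> 0 \<le> y"
      by auto
  next
    show "continuous_on {0..x} (\<lambda>s. exp (A * s) * f s)"
      using x by (intro continuous_intros continuous_on_subset[OF assms(2)]) auto
  qed (use x in simp)
  with \<open>0 < f 0\<close> have "0 < exp (A * x) * f x"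
    by simp
  then show "0 < f x"
    by (simp add: zero_less_mult_iff)
qed

lemma eq_0_of_deriv_le_sup:
  fixes f f' :: "real \<Rightarrow> real"
  assumes cont: "continuous_on {0..R} f" and "f 0 = 0" "0 \<le> L"
    and deriv: "\<And>x. 0 < x \<Longrightarrow> x < R \<Longrightarrow> (f has_real_derivative f' x) (at x)"
    and bound: "\<And>x m. 0 < x \<Longrightarrow> x < R \<Longrightarrow>
      (\<And>s. 0 \<le> s \<Longrightarrow> s \<le> x \<Longrightarrow> \<bar>f s\<bar> \<le> m) \<Longrightarrow> \<bar>f' x\<bar> \<le> L * m"
    and t: "0 \<le> t" "t \<le> R"
  shows "f t = 0"
proof -
  define d where "d = 1 / (2 * L + 2)"
  have "0 < d" "L * d \<le> 1 / 2"
    using \<open>0 \<le> L\<close> by (auto simp: d_def field_simps)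
  (* If |f| attains its maximum on [0,b] at s > a, the mean value theorem on [a,s] gives
     |f s| \<le> d L |f s| \<le> |f s| / 2. *)
  have extend: "\<forall>s\<in>{0..b}. f s = 0"
    if zero: "\<forall>s\<in>{0..a}. f s = 0" and ab: "0 \<le> a" "a \<le> b" "b \<le> R" "b \<le> a + d" for a b
  proof -
    have "continuous_on {0..b} (\<lambda>y. \<bar>f y\<bar>)"
      using ab by (intro continuous_intros continuous_on_subset[OF cont]) auto
    then obtain s where s: "s \<in> {0..b}" "\<And>y. y \<in> {0..b} \<Longrightarrow> \<bar>f y\<bar> \<le> \<bar>f s\<bar>"
      using continuous_attains_sup[of "{0..b}" "\<lambda>y. \<bar>f y\<bar>"] ab by auto
    have "f s = 0"
    proof (cases "s \<le> a")
      case False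
      have "continuous_on {a..s} f"
        using s ab by (intro continuous_on_subset[OF cont]) auto
      moreover have "(f has_derivative (*) (f' z)) (at z)" if "a < z" "z < s" for z
        using deriv[of z] that s ab unfolding has_field_derivative_def by auto
      ultimately obtain z where z: "a < z" "z < s" "\<bar>f s - f a\<bar> \<le> \<bar>f' z * (s - a)\<bar>"
        using mvt_general[of a s f] False by fastforce
      have "\<bar>f' z\<bar> \<le> L * \<bar>f s\<bar>"
        using z s ab by (intro bound s(2)) auto
      have "\<bar>f s\<bar> \<le> \<bar>f' z\<bar> * (s - a)"
        using z zero ab by (simp add: abs_mult)
      also have "\<dots> \<le> L * \<bar>f s\<bar> * d"
        using \<open>\<bar>f' z\<bar> \<le> L * \<bar>f s\<bar>\<close> s ab z by (intro mult_mono) auto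
      also have "\<dots> = (L * d) * \<bar>f s\<bar>"
        by simp
      also have "\<dots> \<le> 1 / 2 * \<bar>f s\<bar>"
        using \<open>L * d \<le> 1 / 2\<close> by (intro mult_right_mono) auto
      finally show ?thesis by simp
    qed (use zero s in auto)
    with s show ?thesis by auto
  qed
  have zero_upto: "\<forall>s\<in>{0..min R (real n * d)}. f s = 0" for n
  proof (induction n)
    case 0
    then show ?case using \<open>f 0 = 0\<close> by auto
  next
    case (Suc n)
    show ?case
      using \<open>0 < d\<close> t
      by (intro extend[OF Suc]) (auto simp: min_def algebra_simps)
  qed
  obtain n where "R / d < real n"
    using reals_Archimedean2 by blast
  then have "R \<le> real n * d"
    using \<open>0 < d\<close> by (simp add: field_simps)
  with t have "t \<in> {0..min R (real n * d)}"
    by simp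
  then show ?thesis
    using zero_upto[of n] by blast
qed

locale convolution_logistic_ode =
  fixes g :: "real \<Rightarrow> real" and M \<beta> :: real and I I' :: "real \<Rightarrow> real"
  assumes kernel_continuous: "continuous_on {0..} g"
    and kernel_nonneg: "\<And>t. 0 \<le> t \<Longrightarrow> 0 \<le> g t"
    and kernel_mass_less_1: "\<And>t. 0 \<le> t \<Longrightarrow> integral {0..t} g < 1"
    and beta_pos: "0 < \<beta>"
    and I_derivative: "\<And>t. 0 \<le> t \<Longrightarrow> (I has_real_derivative I' t) (at t within {0..})"
    and I'_continuous: "continuous_on {0..} I'"
    and ode: "\<And>t. 0 \<le> t \<Longrightarrow>
      I' t = \<beta> * (M - I t) * (I t - integral {0..t} (\<lambda>s. g (t - s) * I s))"
begin

definition conv :: "real \<Rightarrow> real" where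
  "conv t = integral {0..t} (\<lambda>s. g (t - s) * I s)"

lemma ode_conv: "0 \<le> t \<Longrightarrow> I' t = \<beta> * (M - I t) * (I t - conv t)"
  unfolding conv_def by (rule ode)

lemma conv_0 [simp]: "conv 0 = 0"
  by (simp add: conv_def)

lemma continuous_on_I: "0 \<le> a \<Longrightarrow> continuous_on {a..b} I"
  using DERIV_continuous_on[OF I_derivative] by (auto elim: continuous_on_subset)

lemma I_has_real_derivative_at: "0 < t \<Longrightarrow> (I has_real_derivative I' t) (at t)"
  using I_derivative[of t] at_within_interior[of t "{0..}"] by simp

lemma I_bounded:
  obtains K where "0 \<le> K" "\<And>s. 0 \<le> s \<Longrightarrow> s \<le> t \<Longrightarrow> \<bar>I s\<bar> \<le> K"
proof -
  have "bounded (I ` {0..t})"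
    by (intro compact_imp_bounded compact_continuous_image continuous_on_I) auto
  then obtain K where K: "\<forall>y\<in>I ` {0..t}. \<bar>y\<bar> \<le> K"
    by (auto simp: bounded_real)
  show ?thesis
  proof (rule that[of "max 0 K"])
    show "\<bar>I s\<bar> \<le> max 0 K" if "0 \<le> s" "s \<le> t" for s
      using K that by (auto simp: le_max_iff_disj)
  qed simp
qed

lemma continuous_on_reflected_kernel: "continuous_on {0..t} (\<lambda>s. g (t - s))"
  by (rule continuous_on_compose2[OF kernel_continuous])
    (auto intro: continuous_on_diff continuous_on_const continuous_on_id)

lemma integral_reflected_kernel: "integral {0..t} (\<lambda>s. g (t - s)) = integral {0..t} g"
  using Henstock_Kurzweil_Integration.integral_reflect_real[of 0 "-t" "\<lambda>y. g (y + t)"]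
    integral_shift_real_ivl[of 0 t t g]
  by simp

lemma abs_conv_le_mass:
  assumes "\<And>s. 0 \<le> s \<Longrightarrow> s \<le> t \<Longrightarrow> \<bar>I s\<bar> \<le> m"
  shows "\<bar>conv t\<bar> \<le> m * integral {0..t} g"
proof -
  have "norm (g (t - s) * I s) \<le> m * g (t - s)" if "s \<in> {0..t}" for s
    using assms[of s] kernel_nonneg[of "t - s"] that
    by (simp add: abs_mult mult.commute mult_right_mono)
  then have "norm (conv t) \<le> integral {0..t} (\<lambda>s. m * g (t - s))"
    unfolding conv_def
    by (intro integral_norm_bound_integral integrable_continuous_interval continuous_intros
        continuous_on_reflected_kernel continuous_on_I) auto
  then show ?thesis
    by (simp add: integral_reflected_kernel)
qed

lemma abs_conv_le:
  assumes "0 \<le> t" "\<And>s. 0 \<le> s \<Longrightarrow> s \<le> t \<Longrightarrow> \<bar>I s\<bar> \<le> m"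
  shows "\<bar>conv t\<bar> \<le> m"
proof -
  have "0 \<le> m"
    using assms(2)[of 0] assms(1) by simp
  then have "m * integral {0..t} g \<le> m"
    using kernel_mass_less_1[OF assms(1)] by (simp add: mult_left_le)
  with abs_conv_le_mass[of t m] assms(2) show ?thesis
    by simp
qed

lemma abs_conv_less:
  assumes "0 \<le> t" "0 < m" "\<And>s. 0 \<le> s \<Longrightarrow> s \<le> t \<Longrightarrow> \<bar>I s\<bar> \<le> m"
  shows "\<bar>conv t\<bar> < m"
proof -
  have "m * integral {0..t} g < m"
    using kernel_mass_less_1[OF assms(1)] assms(2) by simp
  with abs_conv_le_mass[of t m] assms(3) show ?thesis
    by simp
qed

lemma continuous_on_M_minus_I: "continuous_on {0..t} (\<lambda>s. M - I s)"
  by (intro continuous_intros continuous_on_I) simp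

lemma M_minus_I_has_real_derivative_at:
  "0 < t \<Longrightarrow> ((\<lambda>s. M - I s) has_real_derivative - I' t) (at t)"
  by (auto intro!: derivative_eq_intros I_has_real_derivative_at)

lemma abs_I'_eq: "0 \<le> t \<Longrightarrow> \<bar>I' t\<bar> = \<beta> * \<bar>M - I t\<bar> * \<bar>I t - conv t\<bar>"
  using ode_conv[of t] beta_pos by (simp add: abs_mult)

lemma I_eq_M_if_initial_eq_M:
  assumes "I 0 = M" "0 \<le> t"
  shows "I t = M"
proof -
  obtain K where K: "0 \<le> K" "\<And>s. 0 \<le> s \<Longrightarrow> s \<le> t \<Longrightarrow> \<bar>I s\<bar> \<le> K"
    using I_bounded[of t] by blast
  have "M - I t = 0"
  proof (rule eq_0_of_deriv_le_sup[where f = "\<lambda>s. M - I s" and f' = "\<lambda>s. - I' s"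
        and L = "2 * \<beta> * K" and R = t])
    fix x m
    assume x: "0 < x" "x < t" and m: "\<And>s. 0 \<le> s \<Longrightarrow> s \<le> x \<Longrightarrow> \<bar>M - I s\<bar> \<le> m"
    have "\<bar>conv x\<bar> \<le> K"
      using x K(2) by (intro abs_conv_le) auto
    with K(2)[of x] x have "\<bar>I x - conv x\<bar> \<le> 2 * K"
      by linarith
    have "\<bar>- I' x\<bar> = \<beta> * \<bar>M - I x\<bar> * \<bar>I x - conv x\<bar>"
      using x abs_I'_eq[of x] by simp
    also have "\<dots> \<le> \<beta> * m * (2 * K)"
      using \<open>\<bar>I x - conv x\<bar> \<le> 2 * K\<close> m[of x] x beta_pos by (intro mult_mono mult_left_mono) auto
    finally show "\<bar>- I' x\<bar> \<le> 2 * \<beta> * K * m"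
      by (simp add: algebra_simps)
  qed (use K beta_pos in \<open>auto simp: assms intro: continuous_on_M_minus_I M_minus_I_has_real_derivative_at\<close>)
  then show ?thesis
    by simp
qed

lemma I_eq_0_if_initial_eq_0:
  assumes "I 0 = 0" "0 \<le> t"
  shows "I t = 0"
proof -
  obtain K where K: "0 \<le> K" "\<And>s. 0 \<le> s \<Longrightarrow> s \<le> t \<Longrightarrow> \<bar>I s\<bar> \<le> K"
    using I_bounded[of t] by blast
  show ?thesis
  proof (rule eq_0_of_deriv_le_sup[where f = I and f' = I' and L = "2 * \<beta> * (\<bar>M\<bar> + K)" and R = t])
    fix x m
    assume x: "0 < x" "x < t" and m: "\<And>s. 0 \<le> s \<Longrightarrow> s \<le> x \<Longrightarrow> \<bar>I s\<bar> \<le> m"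
    have "\<bar>conv x\<bar> \<le> m"
      using x m by (intro abs_conv_le) auto
    with m[of x] x have "\<bar>I x - conv x\<bar> \<le> 2 * m"
      by linarith
    moreover have "\<bar>M - I x\<bar> \<le> \<bar>M\<bar> + K"
      using K(2)[of x] x by linarith
    ultimately have "\<beta> * \<bar>M - I x\<bar> * \<bar>I x - conv x\<bar> \<le> \<beta> * (\<bar>M\<bar> + K) * (2 * m)"
      using beta_pos by (intro mult_mono mult_left_mono) auto
    then show "\<bar>I' x\<bar> \<le> 2 * \<beta> * (\<bar>M\<bar> + K) * m"
      using x abs_I'_eq[of x] by (simp add: algebra_simps)
  qed (use assms K beta_pos in \<open>auto intro: continuous_on_I I_has_real_derivative_at\<close>)
qed

lemma I_less_M_if_initial_less_M:
  assumes "I 0 < M" "0 \<le> t"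
  shows "I t < M"
proof -
  obtain K where K: "0 \<le> K" "\<And>s. 0 \<le> s \<Longrightarrow> s \<le> t \<Longrightarrow> \<bar>I s\<bar> \<le> K"
    using I_bounded[of t] by blast
  have "0 < M - I t"
  proof (rule pos_of_deriv_ge_linear[where f = "\<lambda>s. M - I s" and f' = "\<lambda>s. - I' s"
        and A = "2 * \<beta> * K"])
    fix x
    assume x: "0 < x" "x < t" and pos: "0 < M - I x"
    have "\<bar>conv x\<bar> \<le> K"
      using x K(2) by (intro abs_conv_le) auto
    with K(2)[of x] x have "I x - conv x \<le> 2 * K"
      by linarith
    then have "\<beta> * (M - I x) * (I x - conv x) \<le> \<beta> * (M - I x) * (2 * K)"
      using pos beta_pos by (intro mult_left_mono) auto
    then show "- (2 * \<beta> * K) * (M - I x) \<le> - I' x"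
      using ode_conv[of x] x by (simp add: algebra_simps)
  qed (auto simp: assms intro: continuous_on_M_minus_I M_minus_I_has_real_derivative_at)
  then show ?thesis
    by simp
qed

lemma I_le_I_if_deriv_nonneg:
  assumes "0 \<le> a" "a \<le> b" "\<And>x. a < x \<Longrightarrow> x < b \<Longrightarrow> 0 \<le> I' x"
  shows "I a \<le> I b"
proof (rule DERIV_nonneg_imp_increasing_open[OF assms(2)])
  fix x
  assume "a < x" "x < b"
  with assms show "\<exists>y. (I has_real_derivative y) (at x) \<and> 0 \<le> y"
    using I_has_real_derivative_at[of x] by auto
qed (rule continuous_on_I[OF assms(1)])

lemma I'_pos_if_initial_between:
  assumes "0 < I 0" "I 0 < M" "0 \<le> t"
  shows "0 < I' t"
proof (rule continuous_pos_induct[OF assms(3)])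
  show "continuous_on {0..t} I'"
    using I'_continuous by (rule continuous_on_subset) auto
  show "0 < I' 0"
    using ode_conv[of 0] assms beta_pos by simp
next
  fix x
  assume x: "0 < x" "x \<le> t" and pos: "\<And>s. 0 \<le> s \<Longrightarrow> s < x \<Longrightarrow> 0 < I' s"
  have increasing: "I a \<le> I b" if "0 \<le> a" "a \<le> b" "b \<le> x" for a b
    using that pos[THEN less_imp_le] by (intro I_le_I_if_deriv_nonneg) auto
  have "\<bar>I s\<bar> \<le> I x" if "0 \<le> s" "s \<le> x" for s
    using increasing[of 0 s] increasing[of s x] that assms(1) by simp
  then have "\<bar>conv x\<bar> < I x"
    using increasing[of 0 x] x assms(1) by (intro abs_conv_less) auto
  moreover have "I x < M"
    using I_less_M_if_initial_less_M assms(2) x by simp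
  ultimately show "0 < I' x"
    using ode_conv[of x] x beta_pos by simp
qed

lemma I_pos_if_initial_pos:
  assumes "0 < I 0" "I 0 \<le> M" "0 \<le> t"
  shows "0 < I t"
proof (cases "I 0 = M")
  case True
  then show ?thesis
    using I_eq_M_if_initial_eq_M assms by simp
next
  case False
  with assms have I'_pos: "0 < I' x" if "0 \<le> x" for x
    using I'_pos_if_initial_between that by simp
  have "I 0 \<le> I t"
    using assms(3) I'_pos[THEN less_imp_le] by (intro I_le_I_if_deriv_nonneg) auto
  with assms(1) show ?thesis
    by simp
qed

end

lemma continuous_on_normal_density: "0 < \<sigma> \<Longrightarrow> continuous_on S (normal_density \<mu> \<sigma>)"
  unfolding normal_density_def by (intro continuous_intros) auto

lemma integral_normal_density_le_1:
  assumes "0 < \<sigma>"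
  shows "integral {a..b} (normal_density \<mu> \<sigma>) \<le> 1"
proof -
  have "integral {a..b} (normal_density \<mu> \<sigma>) \<le> integral UNIV (normal_density \<mu> \<sigma>)"
    using assms
    by (intro integral_subset_le integrable_on_lborel integrable_continuous_interval
        continuous_on_normal_density integrable_normal_density) auto
  also have "\<dots> = 1"
    using assms by (simp add: integral_lborel)
  finally show ?thesis .
qed

lemma lognormal_density_nonneg: "0 < \<sigma> \<Longrightarrow> 0 \<le> lognormal_density \<mu> \<sigma> t"
  unfolding lognormal_density_def by auto

lemma isCont_lognormal_density:
  assumes "0 < \<sigma>"
  shows "isCont (lognormal_density \<mu> \<sigma>) t"
proof -
  define f where "f t = exp (- ((ln t - \<mu>)^2) / (2 * \<sigma>^2)) / (t * \<sigma> * sqrt (2 * pi))" for t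
  have eventually_eq_f: "\<forall>\<^sub>F x in F. lognormal_density \<mu> \<sigma> x = f x" if "\<forall>\<^sub>F x in F. 0 < x" for F
    using that by eventually_elim (simp add: lognormal_density_def f_def)
  have eventually_eq_0: "\<forall>\<^sub>F x in F. lognormal_density \<mu> \<sigma> x = 0" if "\<forall>\<^sub>F x in F. x < 0" for F
    using that by eventually_elim (simp add: lognormal_density_def)
  consider "t < 0" | "t = 0" | "0 < t" by linarith
  then show ?thesis
  proof cases
    case 1
    then have "\<forall>\<^sub>F x in nhds t. x < 0"
      using eventually_nhds_in_open[of "{..<0}" t] by simp
    then show ?thesis
      by (simp add: isCont_cong[OF eventually_eq_0])
  next
    case 2
    have "(f \<longlongrightarrow> 0) (at_right 0)"
      unfolding f_def using assms by real_asymp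
    then have "(lognormal_density \<mu> \<sigma> \<longlongrightarrow> 0) (at_right 0)"
      using eventually_eq_f[OF eventually_at_right_less] by (simp add: tendsto_cong)
    moreover have "\<forall>\<^sub>F x in at_left 0. x < (0::real)"
      by (rule eventually_at_leftI[of "-1"]) auto
    then have "(lognormal_density \<mu> \<sigma> \<longlongrightarrow> 0) (at_left 0)"
      by (simp add: tendsto_cong[OF eventually_eq_0])
    ultimately show ?thesis
      using 2 by (simp add: isCont_def filterlim_split_at lognormal_density_def)
  next
    case 3
    have "isCont f t"
      unfolding f_def using 3 assms by (intro continuous_intros) auto
    moreover have "\<forall>\<^sub>F x in nhds t. 0 < x"
      using eventually_nhds_in_open[of "{0<..}" t] 3 by simp
    ultimately show ?thesis
      by (simp add: isCont_cong[OF eventually_eq_f])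
  qed
qed

lemma continuous_on_lognormal_density: "0 < \<sigma> \<Longrightarrow> continuous_on S (lognormal_density \<mu> \<sigma>)"
  by (simp add: continuous_at_imp_continuous_on isCont_lognormal_density)

lemma integral_lognormal_density_eq_normal:
  assumes "0 < \<sigma>" "0 < a" "a \<le> t"
  shows "integral {a..t} (lognormal_density \<mu> \<sigma>) = integral {ln a..ln t} (normal_density \<mu> \<sigma>)"
proof -
  have "((\<lambda>x. exp x *\<^sub>R lognormal_density \<mu> \<sigma> (exp x)) has_integral
          integral {exp (ln a)..exp (ln t)} (lognormal_density \<mu> \<sigma>)) {ln a..ln t}"
    using assms
    by (intro has_integral_substitution[where c = a and d = t])
       (auto intro!: continuous_on_lognormal_density derivative_eq_intros simp: ln_ge_iff,
        metis exp_ln exp_le_cancel_iff)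
  moreover have "exp x *\<^sub>R lognormal_density \<mu> \<sigma> (exp x) = normal_density \<mu> \<sigma> x" for x
    using assms by (simp add: lognormal_density_def normal_density_def real_sqrt_mult)
  ultimately show ?thesis
    using assms by (simp add: integral_unique)
qed

lemma integral_lognormal_density_less_1:
  assumes "0 < \<sigma>" "0 \<le> t"
  shows "integral {0..t} (lognormal_density \<mu> \<sigma>) < 1"
proof (cases "t = 0")
  case False
  with assms have "0 < t" by simp
  (* Substituting x = exp y turns ?g on [a,t] into ?\<phi> on [ln a, ln t], which misses at least the
     positive mass c of [ln t, ln t + 1]; then let a tend to 0. *)
  let ?g = "lognormal_density \<mu> \<sigma>" and ?\<phi> = "normal_density \<mu> \<sigma>"
  define c where "c = integral {ln t..ln t + 1} ?\<phi>"
  have "0 < c"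
    unfolding c_def using \<open>0 < \<sigma>\<close>
    by (intro integral_pos_of_continuous_pos continuous_on_normal_density normal_density_pos) auto
  have tail: "integral {a..t} ?g \<le> 1 - c" if "0 < a" "a \<le> t" for a
  proof -
    have "integral {a..t} ?g + c = integral {ln a..ln t + 1} ?\<phi>"
      using that assms unfolding c_def integral_lognormal_density_eq_normal[OF assms(1) that]
      by (intro Henstock_Kurzweil_Integration.integral_combine integrable_continuous_interval
          continuous_on_normal_density) auto
    also have "\<dots> \<le> 1"
      using assms(1) by (rule integral_normal_density_le_1)
    finally show ?thesis by simp
  qed
  have "continuous_on {0..t} (\<lambda>a. integral {a..t} ?g)"
    using assms(1)
    by (intro indefinite_integral_continuous_1' integrable_continuous_interval continuous_on_lognormal_density)
  then have "((\<lambda>a. integral {a..t} ?g) \<longlongrightarrow> integral {0..t} ?g) (at_right 0)"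
    using \<open>0 < t\<close> by (rule continuous_on_Icc_at_rightD)
  moreover have "\<forall>\<^sub>F a in at_right 0. integral {a..t} ?g \<le> 1 - c"
    using \<open>0 < t\<close> tail by (auto simp: eventually_at_right_field)
  ultimately have "integral {0..t} ?g \<le> 1 - c"
    by (rule tendsto_upperbound) simp
  with \<open>0 < c\<close> show ?thesis by simp
qed simp

theorem proposition3p5:
  fixes M \<beta> \<mu> \<sigma> I0 :: real and I I' :: "real \<Rightarrow> real"
  assumes M_pos: "M > 0" and beta_pos: "\<beta> > 0" and sigma_pos: "\<sigma> > 0"
    and I0_range: "0 \<le> I0" "I0 \<le> M"
    and deriv: "\<And>t. t \<ge> 0 \<Longrightarrow> (I has_real_derivative I' t) (at t within {0..})"
    and C1: "continuous_on {0..} I'"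
    and ode: "\<And>t. t \<ge> 0 \<Longrightarrow>
       I' t = \<beta> * (M - I t) * (I t - integral {0..t} (\<lambda>s. lognormal_density \<mu> \<sigma> (t - s) * I s))"
    and init: "I 0 = I0"
  shows "(I0 > 0 \<longrightarrow> (\<forall>t\<ge>0. I t > 0)) \<and> (I0 = 0 \<longrightarrow> (\<forall>t\<ge>0. I t = 0)) \<and>
         (I0 < M \<longrightarrow> (\<forall>t\<ge>0. I t < M)) \<and> (I0 = M \<longrightarrow> (\<forall>t\<ge>0. I t = M))"
proof -
  interpret convolution_logistic_ode "lognormal_density \<mu> \<sigma>" M \<beta> I I'
    using sigma_pos beta_pos deriv C1 ode
    by unfold_locales
      (auto intro: continuous_on_lognormal_density lognormal_density_nonneg
        integral_lognormal_density_less_1)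
  show ?thesis
    using I0_range
    by (intro conjI impI allI)
      (simp_all add: init I_pos_if_initial_pos I_eq_0_if_initial_eq_0 I_less_M_if_initial_less_M
        I_eq_M_if_initial_eq_M)
qed

end
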